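(* For all integers $d\ge2$ and $k\ge2$ there is an instance $H$ of the MAX-$k$-local Hamiltonian problem on qudits of dimension $d$, with optimal value $\mathrm{OPT}>0$, such that every product state assignment $\sigma=\sigma_1\otimes\cdots\otimes\sigma_n$ has value $\mathrm{Tr}(H\sigma)\le \mathrm{OPT}/d^{\lfloor k/2\rfloor}$. In particular, for $k=2$ the bound $\mathrm{OPT}/d^{k-1}$ achievable by product states is tight.
   Context: MAX-$k$-local Hamiltonian on $d$-level systems (qudits): an instance on $n$ qudits (Hilbert space $(\mathbb{C}^d)^{\otimes n}$) consists of one Hermitian matrix $H_{i_1,\ldots,i_k}$ for each $k$-element subset $\{i_1,\ldots,i_k\}$ of the qudits; each $H_{i_1,\ldots,i_k}$ acts nontrivially only on those $k$ qudits, is positive semidefinite, and has operator norm at most $1$. Put $H=\sum H_{i_1,\ldots,i_k}$. An assignment is any state $\rho$ on the $n$ qudits, with value $\mathrm{Tr}(H\rho)$; $\mathrm{OPT}$ is the largest eigenvalue of $H$. *)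

theory Defs
  imports "Jordan_Normal_Form.Char_Poly" "HOL-Library.Cardinality"
begin

text \<open>n qudits of local dimension d: the Hilbert space (C^d)^{tensor n} is C^(d^n), with
  basis index i < d^n encoding the configuration whose q-th qudit (q < n) is digit d q i.\<close>

definition digit :: "nat \<Rightarrow> nat \<Rightarrow> nat \<Rightarrow> nat" where
  "digit d q i = (i div d ^ q) mod d"

definition mtrace :: "complex mat \<Rightarrow> complex" where
  "mtrace A = (\<Sum>i<dim_row A. A $$ (i, i))"

definition hermitian_mat :: "nat \<Rightarrow> complex mat \<Rightarrow> bool" where
  "hermitian_mat m A \<longleftrightarrow> A \<in> carrier_mat m m \<and>
     (\<forall>i<m. \<forall>j<m. A $$ (i, j) = cnj (A $$ (j, i)))"

definition psd_mat :: "nat \<Rightarrow> complex mat \<Rightarrow> bool" where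
  "psd_mat m A \<longleftrightarrow> hermitian_mat m A \<and>
     (\<forall>v \<in> carrier_vec m. 0 \<le> Re ((A *\<^sub>v v) \<bullet>c v))"

definition vnorm2 :: "complex vec \<Rightarrow> real" where
  "vnorm2 v = (\<Sum>i<dim_vec v. (cmod (v $ i))\<^sup>2)"

definition opnorm_le1 :: "nat \<Rightarrow> complex mat \<Rightarrow> bool" where
  "opnorm_le1 m A \<longleftrightarrow> (\<forall>v \<in> carrier_vec m. vnorm2 (A *\<^sub>v v) \<le> vnorm2 v)"

definition density_mat :: "nat \<Rightarrow> complex mat \<Rightarrow> bool" where
  "density_mat m A \<longleftrightarrow> psd_mat m A \<and> mtrace A = 1"

text \<open>index into C^(d^|S|) of the restriction of configuration i to the qudits in S
  (qudits of S taken in increasing order)\<close>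
definition local_index :: "nat \<Rightarrow> nat set \<Rightarrow> nat \<Rightarrow> nat" where
  "local_index d S i = (\<Sum>t<card S. digit d (sorted_list_of_set S ! t) i * d ^ t)"

text \<open>the operator h (on the qudits in S) tensored with the identity on the other qudits\<close>
definition embed_local :: "nat \<Rightarrow> nat \<Rightarrow> nat set \<Rightarrow> complex mat \<Rightarrow> complex mat" where
  "embed_local n d S h = mat (d ^ n) (d ^ n) (\<lambda>(i, j).
     if (\<forall>q<n. q \<notin> S \<longrightarrow> digit d q i = digit d q j)
     then h $$ (local_index d S i, local_index d S j) else 0)"

definition k_subsets :: "nat \<Rightarrow> nat \<Rightarrow> nat set set" where
  "k_subsets n k = {S. S \<subseteq> {..<n} \<and> card S = k}"

definition valid_instance :: "nat \<Rightarrow> nat \<Rightarrow> nat \<Rightarrow> (nat set \<Rightarrow> complex mat) \<Rightarrow> bool" where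
  "valid_instance n d k h \<longleftrightarrow> (\<forall>S \<in> k_subsets n k.
      psd_mat (d ^ k) (h S) \<and> opnorm_le1 (d ^ k) (h S))"

definition hamiltonian :: "nat \<Rightarrow> nat \<Rightarrow> nat \<Rightarrow> (nat set \<Rightarrow> complex mat) \<Rightarrow> complex mat" where
  "hamiltonian n d k h = mat (d ^ n) (d ^ n) (\<lambda>(i, j).
     \<Sum>S \<in> k_subsets n k. embed_local n d S (h S) $$ (i, j))"

definition product_state :: "nat \<Rightarrow> nat \<Rightarrow> (nat \<Rightarrow> complex mat) \<Rightarrow> complex mat" where
  "product_state n d \<sigma> = mat (d ^ n) (d ^ n) (\<lambda>(i, j).
     \<Prod>q<n. \<sigma> q $$ (digit d q i, digit d q j))"

definition is_largest_eigenvalue :: "complex mat \<Rightarrow> real \<Rightarrow> bool" where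
  "is_largest_eigenvalue A opt \<longleftrightarrow> eigenvalue A (complex_of_real opt) \<and>
     (\<forall>a. eigenvalue A a \<longrightarrow> Re a \<le> opt)"

end

theory Submission
  imports Defs
begin

text \<open>The instance has a single term acting on all k qudits: the projector onto the state in
  which qudits 2t and 2t+1 (t < k div 2) form maximally entangled pairs and any remaining
  qudit is in state |0>. Being a projector it has largest eigenvalue 1. Against a product
  state its value factorises over the pairs, and a pair of qudits in states \<sigma>, \<tau>
  contributes (1/d) \<Sum>(a,b) \<sigma>(b,a) \<tau>(b,a). Positive semidefiniteness gives
  |\<sigma>(b,a)|^2 \<le> \<sigma>(a,a) \<sigma>(b,b), so by AM-GM the double sum is at most
  tr \<sigma> tr \<tau> = 1, and each pair contributes at most 1/d.\<close>

subsection \<open>Digit expansions\<close>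

lemma sum_lessThan_mult:
  fixes F :: "nat \<Rightarrow> 'a::comm_monoid_add"
  shows "(\<Sum>i<D * M. F i) = (\<Sum>j<M. \<Sum>a<D. F (a + D * j))"
proof (induction M)
  case 0
  then show ?case by simp
next
  case (Suc M)
  have "{..<D * Suc M} = {..<D * M} \<union> {D * M..<D * M + D}"
    by (auto simp: algebra_simps)
  then have "(\<Sum>i<D * Suc M. F i) = (\<Sum>i<D * M. F i) + (\<Sum>i\<in>{D * M..<D * M + D}. F i)"
    by (simp add: sum.union_disjoint ivl_disj_int)
  also have "(\<Sum>i\<in>{D * M..<D * M + D}. F i) = (\<Sum>a<D. F (a + D * M))"
    using sum.shift_bounds_nat_ivl[of F 0 "D * M" D] by (simp add: atLeast0LessThan add.commute)
  finally show ?case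
    using Suc by simp
qed

lemma digit_0_add_mult: "a < D \<Longrightarrow> digit D 0 (a + D * j) = a"
  by (simp add: digit_def)

lemma digit_Suc_add_mult: "a < D \<Longrightarrow> digit D (Suc t) (a + D * j) = digit D t j"
  by (simp add: digit_def power_Suc div_mult2_eq)

lemma sum_prod_digits:
  fixes g :: "nat \<Rightarrow> nat \<Rightarrow> 'a::comm_semiring_1"
  shows "(\<Sum>i<D ^ m. \<Prod>t<m. g t (digit D t i)) = (\<Prod>t<m. \<Sum>a<D. g t a)"
proof (induction m arbitrary: g)
  case 0
  then show ?case by simp
next
  case (Suc m)
  have "(\<Sum>i<D ^ Suc m. \<Prod>t<Suc m. g t (digit D t i))
      = (\<Sum>j<D ^ m. \<Sum>a<D. \<Prod>t<Suc m. g t (digit D t (a + D * j)))"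
    by (simp add: sum_lessThan_mult)
  also have "\<dots> = (\<Sum>j<D ^ m. \<Sum>a<D. g 0 a * (\<Prod>t<m. g (Suc t) (digit D t j)))"
    by (intro sum.cong refl)
      (simp only: prod.lessThan_Suc_shift digit_0_add_mult digit_Suc_add_mult lessThan_iff)
  also have "\<dots> = (\<Sum>a<D. g 0 a) * (\<Sum>j<D ^ m. \<Prod>t<m. g (Suc t) (digit D t j))"
    by (simp add: sum_distrib_right sum_distrib_left)
  also have "\<dots> = (\<Sum>a<D. g 0 a) * (\<Prod>t<m. \<Sum>a<D. g (Suc t) a)"
    using Suc[of "\<lambda>t. g (Suc t)"] by simp
  finally show ?case
    by (simp only: prod.lessThan_Suc_shift)
qed

lemma sum_sum_prod_digits:
  fixes G :: "nat \<Rightarrow> nat \<Rightarrow> nat \<Rightarrow> 'a::comm_semiring_1"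
  shows "(\<Sum>i<D ^ m. \<Sum>j<D ^ m. \<Prod>t<m. G t (digit D t i) (digit D t j))
       = (\<Prod>t<m. \<Sum>a<D. \<Sum>b<D. G t a b)"
proof -
  have "(\<Sum>i<D ^ m. \<Sum>j<D ^ m. \<Prod>t<m. G t (digit D t i) (digit D t j))
      = (\<Sum>i<D ^ m. \<Prod>t<m. \<Sum>b<D. G t (digit D t i) b)"
    by (intro sum.cong refl) (rule sum_prod_digits)
  also have "\<dots> = (\<Prod>t<m. \<Sum>a<D. \<Sum>b<D. G t a b)"
    by (rule sum_prod_digits)
  finally show ?thesis .
qed

lemma sum_digit_mult_power: "(\<Sum>t<k. digit d t i * d ^ t) = i mod d ^ k"
proof (induction k)
  case 0
  then show ?case by simp
next
  case (Suc k)
  have "i mod (d ^ k * d) = d ^ k * (i div d ^ k mod d) + i mod d ^ k"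
    by (rule mod_mult2_eq)
  then show ?case
    using Suc by (simp add: digit_def power_Suc2 mult.commute)
qed

lemma digit_eq_0_if_less_power: "0 < d \<Longrightarrow> i < d ^ m \<Longrightarrow> m \<le> q \<Longrightarrow> digit d q i = 0"
  using power_increasing[of m q d] by (simp add: digit_def)

lemma digit_double: "0 < d \<Longrightarrow> digit d (2 * t) i = digit (d * d) t i mod d"
  by (simp add: digit_def power_mult power2_eq_square mod_mod_cancel)

lemma digit_Suc_double: "0 < d \<Longrightarrow> digit d (Suc (2 * t)) i = digit (d * d) t i div d"
proof -
  assume d: "0 < d"
  have "i div (d * d) ^ t mod (d * d) = d * (i div (d * d) ^ t div d mod d) + i div (d * d) ^ t mod d"
    by (rule mod_mult2_eq)
  then have "i div (d * d) ^ t mod (d * d) div d = i div (d * d) ^ t div d mod d"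
    using d by simp
  moreover have "i div d div (d * d) ^ t = i div (d * d) ^ t div d"
    by (metis div_mult2_eq mult.commute)
  ultimately show ?thesis
    by (simp add: digit_def power_mult power2_eq_square div_mult2_eq power_Suc2)
qed

lemma mult_self_power_le_power:
  fixes d :: nat
  assumes "0 < d" and "2 * p \<le> k"
  shows "(d * d) ^ p \<le> d ^ k"
proof -
  have "(d * d) ^ p = d ^ (2 * p)"
    by (simp add: power_mult power2_eq_square)
  also have "\<dots> \<le> d ^ k"
    using assms by (simp add: power_increasing)
  finally show ?thesis .
qed

lemma prod_lessThan_double:
  fixes f :: "nat \<Rightarrow> 'a::comm_monoid_mult"
  shows "(\<Prod>q<2 * p. f q) = (\<Prod>t<p. f (2 * t) * f (Suc (2 * t)))"
  by (induction p) (simp_all add: mult_ac)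

lemma cauchy_schwarz_sum:
  fixes a b :: "nat \<Rightarrow> real"
  shows "(\<Sum>i\<in>I. a i * b i)\<^sup>2 \<le> (\<Sum>i\<in>I. (a i)\<^sup>2) * (\<Sum>i\<in>I. (b i)\<^sup>2)"
proof -
  let ?A = "\<Sum>i\<in>I. (a i)\<^sup>2" and ?B = "\<Sum>i\<in>I. (b i)\<^sup>2" and ?S = "\<Sum>i\<in>I. a i * b i"
  have "0 \<le> (\<Sum>i\<in>I. \<Sum>j\<in>I. (a i * b j - a j * b i)\<^sup>2)"
    by (intro sum_nonneg) auto
  also have "\<dots> = (\<Sum>i\<in>I. \<Sum>j\<in>I. (a i)\<^sup>2 * (b j)\<^sup>2) + (\<Sum>i\<in>I. \<Sum>j\<in>I. (b i)\<^sup>2 * (a j)\<^sup>2)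
      - 2 * (\<Sum>i\<in>I. \<Sum>j\<in>I. (a i * b i) * (a j * b j))"
    by (simp add: sum_subtractf sum.distrib sum_distrib_left power2_eq_square algebra_simps)
  also have "\<dots> = ?A * ?B + ?B * ?A - 2 * (?S * ?S)"
    by (simp only: sum_product)
  finally show ?thesis
    by (simp add: power2_eq_square)
qed

lemma cscalar_prod_sum:
  fixes u v :: "complex vec"
  assumes "u \<in> carrier_vec n"
  shows "v \<bullet>c u = (\<Sum>i<n. v $ i * cnj (u $ i))"
  using assms by (simp add: scalar_prod_def atLeast0LessThan)

lemma cscalar_prod_swap:
  fixes u v :: "complex vec"
  assumes "u \<in> carrier_vec n" and "v \<in> carrier_vec n"
  shows "u \<bullet>c v = cnj (v \<bullet>c u)"
  using assms by (simp add: cscalar_prod_sum mult.commute)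

lemma cscalar_prod_self: "v \<bullet>c v = complex_of_real (vnorm2 v)"
proof -
  have "v \<bullet>c v = (\<Sum>i<dim_vec v. v $ i * cnj (v $ i))"
    by (rule cscalar_prod_sum) simp
  also have "\<dots> = complex_of_real (vnorm2 v)"
    unfolding vnorm2_def by (simp only: of_real_sum complex_norm_square)
  finally show ?thesis .
qed

lemma vnorm2_smult: "vnorm2 (a \<cdot>\<^sub>v v) = (cmod a)\<^sup>2 * vnorm2 v"
  by (simp add: vnorm2_def norm_mult power_mult_distrib sum_distrib_left)

lemma vnorm2_pos:
  assumes "v \<in> carrier_vec n" and "v \<noteq> 0\<^sub>v n"
  shows "0 < vnorm2 v"
proof -
  obtain i where i: "i < n" "v $ i \<noteq> 0"
    using assms by (metis carrier_vecD eq_vecI index_zero_vec)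
  then have "0 < (cmod (v $ i))\<^sup>2"
    by simp
  also have "\<dots> \<le> vnorm2 v"
    unfolding vnorm2_def using assms(1) i by (intro member_le_sum) auto
  finally show ?thesis .
qed

lemma cscalar_prod_cauchy_schwarz:
  fixes u v :: "complex vec"
  assumes u: "u \<in> carrier_vec n" and v: "v \<in> carrier_vec n"
  shows "(cmod (v \<bullet>c u))\<^sup>2 \<le> vnorm2 v * vnorm2 u"
proof -
  have "cmod (v \<bullet>c u) \<le> (\<Sum>i<n. cmod (v $ i) * cmod (u $ i))"
    unfolding cscalar_prod_sum[OF u] by (rule order_trans[OF norm_sum]) (simp add: norm_mult)
  then have "(cmod (v \<bullet>c u))\<^sup>2 \<le> (\<Sum>i<n. cmod (v $ i) * cmod (u $ i))\<^sup>2"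
    by (rule power_mono[OF _ norm_ge_zero])
  also have "\<dots> \<le> (\<Sum>i<n. (cmod (v $ i))\<^sup>2) * (\<Sum>i<n. (cmod (u $ i))\<^sup>2)"
    by (rule cauchy_schwarz_sum)
  finally show ?thesis
    using u v by (simp add: vnorm2_def)
qed

lemma eigenvalue_norm_le1:
  assumes A: "A \<in> carrier_mat n n" and contr: "opnorm_le1 n A" and "eigenvalue A a"
  shows "cmod a \<le> 1"
proof -
  obtain v where "eigenvector A v a"
    using assms(3) unfolding eigenvalue_def by blast
  then have v: "v \<in> carrier_vec n" and v0: "v \<noteq> 0\<^sub>v n" and Av: "A *\<^sub>v v = a \<cdot>\<^sub>v v"
    using A unfolding eigenvector_def by auto
  have pos: "0 < vnorm2 v"
    using v v0 by (rule vnorm2_pos)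
  have "(cmod a)\<^sup>2 * vnorm2 v \<le> 1 * vnorm2 v"
    using contr v Av unfolding opnorm_le1_def by (metis vnorm2_smult mult_1)
  then have "(cmod a)\<^sup>2 \<le> 1"
    using pos by (rule mult_right_le_imp_le)
  then show ?thesis
    by (simp add: power_le_one_iff abs_square_le_1)
qed

subsection \<open>Positive semidefinite matrices and density matrices\<close>

lemma psd_mat_diag_real: "psd_mat m A \<Longrightarrow> i < m \<Longrightarrow> Im (A $$ (i, i)) = 0"
  unfolding psd_mat_def hermitian_mat_def by (metis cnj.simps(2) neg_equal_zero)

lemma cscalar_prod_two_point:
  fixes x y :: complex
  assumes A: "A \<in> carrier_mat m m" and ij: "i < m" "j < m" "i \<noteq> j"
  defines "v \<equiv> vec m (\<lambda>l. if l = i then x else if l = j then y else 0)"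
  shows "(A *\<^sub>v v) \<bullet>c v = (A $$ (i, i) * x + A $$ (i, j) * y) * cnj x
                         + (A $$ (j, i) * x + A $$ (j, j) * y) * cnj y"
proof -
  have v_eq: "\<And>l. l < m \<Longrightarrow> v $ l = (if l = i then x else 0) + (if l = j then y else 0)"
    using ij by (simp add: v_def)
  have Av: "(A *\<^sub>v v) $ l = A $$ (l, i) * x + A $$ (l, j) * y" if l: "l < m" for l
  proof -
    have "(A *\<^sub>v v) $ l = (\<Sum>r\<in>{0..<m}. A $$ (l, r) * v $ r)"
      using A l by (simp add: scalar_prod_def row_def v_def)
    also have "\<dots> = (\<Sum>r\<in>{0..<m}. (if r = i then A $$ (l, r) * x else 0)
                                    + (if r = j then A $$ (l, r) * y else 0))"
      using ij by (intro sum.cong refl) (auto simp: v_eq distrib_left)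
    finally show ?thesis
      using ij by (simp add: sum.distrib)
  qed
  have "(A *\<^sub>v v) \<bullet>c v = (\<Sum>l\<in>{0..<m}. (A *\<^sub>v v) $ l * cnj (v $ l))"
    by (simp add: scalar_prod_def v_def)
  also have "\<dots> = (\<Sum>l\<in>{0..<m}. (if l = i then (A *\<^sub>v v) $ l * cnj x else 0)
                                  + (if l = j then (A *\<^sub>v v) $ l * cnj y else 0))"
    using ij by (intro sum.cong refl) (auto simp: v_eq distrib_left)
  finally show ?thesis
    using Av ij by (simp add: sum.distrib)
qed

lemma cscalar_prod_unit_vec:
  fixes A :: "complex mat"
  assumes A: "A \<in> carrier_mat m m" and i: "i < m"
  shows "(A *\<^sub>v unit_vec m i) \<bullet>c unit_vec m i = A $$ (i, i)"
proof -
  have "conjugate (unit_vec m i) = (unit_vec m i :: complex vec)"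
    using i by (intro eq_vecI) auto
  then show ?thesis
    using A i by (simp add: row_def)
qed

lemma psd_mat_diag_nonneg:
  assumes "psd_mat m A" and "i < m"
  shows "0 \<le> Re (A $$ (i, i))"
proof -
  have "A \<in> carrier_mat m m" and "0 \<le> Re ((A *\<^sub>v unit_vec m i) \<bullet>c unit_vec m i)"
    using assms(1) unfolding psd_mat_def hermitian_mat_def by auto
  then show ?thesis
    using assms(2) by (simp add: cscalar_prod_unit_vec)
qed

lemma psd_mat_entry_bound:
  assumes P: "psd_mat m A" and ij: "i < m" "j < m"
  shows "(cmod (A $$ (i, j)))\<^sup>2 \<le> Re (A $$ (i, i)) * Re (A $$ (j, j))"
proof (cases "i = j")
  case True
  then show ?thesis
    using psd_mat_diag_real[OF P ij(1)] cmod_power2[of "A $$ (i, i)"] by (simp add: power2_eq_square)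
next
  case False
  have A: "A \<in> carrier_mat m m" and herm: "A $$ (j, i) = cnj (A $$ (i, j))"
    using P ij unfolding psd_mat_def hermitian_mat_def by blast+
  define a b c where "a = A $$ (i, i)" and "b = A $$ (j, j)" and "c = A $$ (i, j)"
  have ia: "Im a = 0" and ib: "Im b = 0"
    using psd_mat_diag_real[OF P] ij by (simp_all add: a_def b_def)
  have rb: "0 \<le> Re b"
    using psd_mat_diag_nonneg[OF P ij(2)] by (simp add: b_def)
  have cc: "cmod c * cmod c = Re c * Re c + Im c * Im c"
    using cmod_power2[of c] by (simp add: power2_eq_square)
  have Q: "0 \<le> Re ((a * x + c * y) * cnj x + (cnj c * x + b * y) * cnj y)" for x y
  proof -
    define v where "v = vec m (\<lambda>l. if l = i then x else if l = j then y else 0)"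
    have "v \<in> carrier_vec m"
      by (simp add: v_def)
    then have "0 \<le> Re ((A *\<^sub>v v) \<bullet>c v)"
      using P unfolding psd_mat_def by blast
    then show ?thesis
      using cscalar_prod_two_point[OF A ij False, of x y] herm by (simp add: v_def a_def b_def c_def)
  qed
  show ?thesis
  proof (cases "Re b > 0")
    case True
    have "0 \<le> Re ((a * Re b + c * (- cnj c)) * cnj (Re b) + (cnj c * Re b + b * (- cnj c)) * cnj (- cnj c))"
      using Q by blast
    also have "\<dots> = Re b * (Re a * Re b - (cmod c)\<^sup>2)"
      using ia ib cc by (simp add: algebra_simps power2_eq_square)
    finally show ?thesis
      using True by (simp add: zero_le_mult_iff a_def b_def c_def)
  next
    case False
    with rb have b0: "Re b = 0"
      by simp
    have "c = 0"
    proof (rule ccontr)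
      assume c0: "c \<noteq> 0"
      define t where "t = (Re a + 1) / (2 * (cmod c)\<^sup>2)"
      have "0 \<le> Re ((a * 1 + c * (- t * cnj c)) * cnj 1 + (cnj c * 1 + b * (- t * cnj c)) * cnj (- t * cnj c))"
        using Q by blast
      also have "\<dots> = Re a - 2 * t * (cmod c)\<^sup>2"
        using ia ib b0 cc by (simp add: algebra_simps power2_eq_square)
      also have "\<dots> = -1"
        using c0 by (simp add: t_def field_simps)
      finally show False
        by simp
    qed
    then show ?thesis
      using psd_mat_diag_nonneg[OF P ij(1)] psd_mat_diag_nonneg[OF P ij(2)] by (simp add: c_def)
  qed
qed

lemma density_mat_trace_Re:
  assumes "density_mat m A"
  shows "(\<Sum>i<m. Re (A $$ (i, i))) = 1"
proof -
  have "dim_row A = m"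
    using assms unfolding density_mat_def psd_mat_def hermitian_mat_def by auto
  then have "(\<Sum>i<m. A $$ (i, i)) = 1"
    using assms unfolding density_mat_def mtrace_def by simp
  then show ?thesis
    by (simp flip: Re_sum)
qed

lemma density_mat_diag_norm_le1:
  assumes D: "density_mat m A" and i: "i < m"
  shows "cmod (A $$ (i, i)) \<le> 1"
proof -
  have P: "psd_mat m A"
    using D unfolding density_mat_def by simp
  have "cmod (A $$ (i, i)) = Re (A $$ (i, i))"
    using psd_mat_diag_real[OF P i] psd_mat_diag_nonneg[OF P i] by (simp add: cmod_eq_Re)
  also have "\<dots> \<le> (\<Sum>i<m. Re (A $$ (i, i)))"
    using psd_mat_diag_nonneg[OF P] i by (intro member_le_sum) auto
  finally show ?thesis
    using density_mat_trace_Re[OF D] by simp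
qed

lemma density_mat_pair_overlap_le1:
  assumes S: "density_mat m \<sigma>" and T: "density_mat m \<tau>"
  shows "cmod (\<Sum>a<m. \<Sum>b<m. \<sigma> $$ (b, a) * \<tau> $$ (b, a)) \<le> 1"
proof -
  have PS: "psd_mat m \<sigma>" and PT: "psd_mat m \<tau>"
    using S T unfolding density_mat_def by auto
  define x y where "x i = Re (\<sigma> $$ (i, i))" and "y i = Re (\<tau> $$ (i, i))" for i
  have x0: "0 \<le> x i" and y0: "0 \<le> y i" if "i < m" for i
    using psd_mat_diag_nonneg[OF PS that] psd_mat_diag_nonneg[OF PT that] by (simp_all add: x_def y_def)
  have entry: "cmod (\<sigma> $$ (b, a) * \<tau> $$ (b, a)) \<le> (x b * y a + x a * y b) / 2"
    if ab: "a < m" "b < m" for a b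
  proof -
    have "(cmod (\<sigma> $$ (b, a) * \<tau> $$ (b, a)))\<^sup>2 = (cmod (\<sigma> $$ (b, a)))\<^sup>2 * (cmod (\<tau> $$ (b, a)))\<^sup>2"
      by (simp add: norm_mult power_mult_distrib)
    also have "\<dots> \<le> (x b * x a) * (y b * y a)"
    proof (rule mult_mono)
      show "(cmod (\<sigma> $$ (b, a)))\<^sup>2 \<le> x b * x a" and "(cmod (\<tau> $$ (b, a)))\<^sup>2 \<le> y b * y a"
        using psd_mat_entry_bound[OF PS ab(2) ab(1)] psd_mat_entry_bound[OF PT ab(2) ab(1)]
        unfolding x_def y_def .
      show "0 \<le> x b * x a"
        using x0 ab by simp
    qed simp
    also have "\<dots> \<le> ((x b * y a + x a * y b) / 2)\<^sup>2"
      using zero_le_power2[of "x b * y a - x a * y b"]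
      by (simp add: power2_eq_square algebra_simps divide_simps)
    finally show ?thesis
      by (rule power2_le_imp_le) (simp add: x0 y0 ab)
  qed
  have "cmod (\<Sum>a<m. \<Sum>b<m. \<sigma> $$ (b, a) * \<tau> $$ (b, a))
      \<le> (\<Sum>a<m. \<Sum>b<m. cmod (\<sigma> $$ (b, a) * \<tau> $$ (b, a)))"
    by (rule order_trans[OF norm_sum sum_mono]) (rule norm_sum)
  also have "\<dots> \<le> (\<Sum>a<m. \<Sum>b<m. (x b * y a + x a * y b) / 2)"
    using entry by (intro sum_mono) auto
  also have "\<dots> = ((\<Sum>a<m. \<Sum>b<m. y a * x b) + (\<Sum>a<m. \<Sum>b<m. x a * y b)) / 2"
    by (simp add: sum.distrib add_divide_distrib sum_divide_distrib[symmetric] mult.commute)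
  also have "\<dots> = ((\<Sum>a<m. y a) * (\<Sum>b<m. x b) + (\<Sum>a<m. x a) * (\<Sum>b<m. y b)) / 2"
    by (simp only: sum_product)
  also have "\<dots> = 1"
    using density_mat_trace_Re[OF S] density_mat_trace_Re[OF T] by (simp add: x_def y_def)
  finally show ?thesis .
qed

definition proj_mat :: "complex vec \<Rightarrow> complex mat" where
  "proj_mat u = mat (dim_vec u) (dim_vec u) (\<lambda>(i, j). u $ i * cnj (u $ j))"

lemma proj_mat_carrier: "u \<in> carrier_vec n \<Longrightarrow> proj_mat u \<in> carrier_mat n n"
  by (simp add: proj_mat_def)

lemma proj_mat_mult_vec:
  assumes u: "u \<in> carrier_vec n" and v: "v \<in> carrier_vec n"
  shows "proj_mat u *\<^sub>v v = (v \<bullet>c u) \<cdot>\<^sub>v u"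
proof (rule eq_vecI)
  fix i
  assume "i < dim_vec ((v \<bullet>c u) \<cdot>\<^sub>v u)"
  then have i: "i < n"
    using u by simp
  have "(proj_mat u *\<^sub>v v) $ i = (\<Sum>j<n. u $ i * cnj (u $ j) * v $ j)"
    using u v i by (simp add: proj_mat_def scalar_prod_def atLeast0LessThan)
  also have "\<dots> = u $ i * (v \<bullet>c u)"
    using u by (simp add: cscalar_prod_sum sum_distrib_left mult_ac)
  finally show "(proj_mat u *\<^sub>v v) $ i = ((v \<bullet>c u) \<cdot>\<^sub>v u) $ i"
    using u i by (simp add: mult.commute)
qed (use u in \<open>simp add: proj_mat_def\<close>)

lemma proj_mat_psd:
  assumes u: "u \<in> carrier_vec n"
  shows "psd_mat n (proj_mat u)"
  unfolding psd_mat_def hermitian_mat_def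
proof (intro conjI allI impI ballI)
  show "proj_mat u \<in> carrier_mat n n"
    using u by (rule proj_mat_carrier)
  show "proj_mat u $$ (i, j) = cnj (proj_mat u $$ (j, i))" if "i < n" "j < n" for i j
    using u that by (simp add: proj_mat_def)
  show "0 \<le> Re ((proj_mat u *\<^sub>v v) \<bullet>c v)" if v: "v \<in> carrier_vec n" for v
  proof -
    have "(proj_mat u *\<^sub>v v) \<bullet>c v = (v \<bullet>c u) * (u \<bullet>c v)"
      using u v by (simp add: proj_mat_mult_vec)
    also have "\<dots> = complex_of_real ((cmod (v \<bullet>c u))\<^sup>2)"
      by (simp only: cscalar_prod_swap[OF u v] complex_norm_square)
    finally show ?thesis
      by simp
  qed
qed

lemma proj_mat_opnorm_le1:
  assumes u: "u \<in> carrier_vec n" and unit: "vnorm2 u = 1"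
  shows "opnorm_le1 n (proj_mat u)"
  unfolding opnorm_le1_def
proof
  fix v :: "complex vec"
  assume v: "v \<in> carrier_vec n"
  have "vnorm2 (proj_mat u *\<^sub>v v) = (cmod (v \<bullet>c u))\<^sup>2"
    using u v unit by (simp add: proj_mat_mult_vec vnorm2_smult)
  also have "\<dots> \<le> vnorm2 v"
    using cscalar_prod_cauchy_schwarz[OF u v] unit by simp
  finally show "vnorm2 (proj_mat u *\<^sub>v v) \<le> vnorm2 v" .
qed

lemma proj_mat_largest_eigenvalue:
  assumes u: "u \<in> carrier_vec n" and unit: "vnorm2 u = 1"
  shows "is_largest_eigenvalue (proj_mat u) 1"
  unfolding is_largest_eigenvalue_def
proof (intro conjI allI impI)
  have "proj_mat u *\<^sub>v u = 1 \<cdot>\<^sub>v u"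
    using u unit by (simp add: proj_mat_mult_vec cscalar_prod_self)
  moreover have "u \<noteq> 0\<^sub>v n"
    using unit by (auto simp: vnorm2_def)
  ultimately show "eigenvalue (proj_mat u) (complex_of_real 1)"
    using u unfolding eigenvalue_def eigenvector_def by (auto simp: proj_mat_def)
next
  fix a
  assume "eigenvalue (proj_mat u) a"
  then have "cmod a \<le> 1"
    using eigenvalue_norm_le1 proj_mat_carrier[OF u] proj_mat_opnorm_le1[OF u unit] by blast
  then show "Re a \<le> 1"
    using complex_Re_le_cmod[of a] by linarith
qed

lemma mtrace_proj_mat_mult:
  assumes u: "u \<in> carrier_vec n" and B: "B \<in> carrier_mat n n"
  shows "mtrace (proj_mat u * B) = (\<Sum>i<n. \<Sum>j<n. u $ i * cnj (u $ j) * B $$ (j, i))"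
  unfolding mtrace_def
  using u B by (intro sum.cong) (auto simp: proj_mat_def scalar_prod_def atLeast0LessThan)

subsection \<open>The paired state\<close>

text \<open>Qudits 2t and 2t+1 (t < p) in the maximally entangled state and every further qudit in
  state |0>: read in base d*d, configuration i carries weight 1 iff it has at most p digits
  and each of them packs two equal base-d digits.\<close>

definition diag_indicator :: "nat \<Rightarrow> nat \<Rightarrow> real" where
  "diag_indicator d A = (if A mod d = A div d then 1 else 0)"

definition pairing_weight :: "nat \<Rightarrow> nat \<Rightarrow> nat \<Rightarrow> real" where
  "pairing_weight d p i =
     (if i < (d * d) ^ p then \<Prod>t<p. diag_indicator d (digit (d * d) t i) else 0)"

definition paired_state :: "nat \<Rightarrow> nat \<Rightarrow> nat \<Rightarrow> complex vec" where
  "paired_state d p n = vec n (\<lambda>i. complex_of_real (pairing_weight d p i / sqrt (real d ^ p)))"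

lemma sum_diag_indicator:
  fixes F :: "nat \<Rightarrow> nat \<Rightarrow> 'a::real_algebra_1"
  shows "(\<Sum>A<d * d. of_real (diag_indicator d A) * F (A mod d) (A div d)) = (\<Sum>a<d. F a a)"
proof -
  have "(\<Sum>A<d * d. of_real (diag_indicator d A) * F (A mod d) (A div d))
      = (\<Sum>j<d. \<Sum>a<d. of_real (diag_indicator d (a + d * j)) * F ((a + d * j) mod d) ((a + d * j) div d))"
    by (rule sum_lessThan_mult)
  also have "\<dots> = (\<Sum>j<d. \<Sum>a<d. if a = j then F j j else 0)"
    by (intro sum.cong refl) (auto simp: diag_indicator_def)
  finally show ?thesis
    by simp
qed

lemma sum_sum_diag_indicator:
  fixes X Y :: "complex mat"
  shows "(\<Sum>A<d * d. \<Sum>B<d * d. complex_of_real (diag_indicator d A * diag_indicator d B) *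
            X $$ (B mod d, A mod d) * Y $$ (B div d, A div d))
       = (\<Sum>a<d. \<Sum>b<d. X $$ (b, a) * Y $$ (b, a))"
proof -
  have "(\<Sum>A<d * d. \<Sum>B<d * d. complex_of_real (diag_indicator d A * diag_indicator d B) *
            X $$ (B mod d, A mod d) * Y $$ (B div d, A div d))
      = (\<Sum>A<d * d. complex_of_real (diag_indicator d A) * (\<Sum>B<d * d. complex_of_real (diag_indicator d B) *
            (X $$ (B mod d, A mod d) * Y $$ (B div d, A div d))))"
    by (simp add: sum_distrib_left mult_ac)
  also have "\<dots> = (\<Sum>A<d * d. complex_of_real (diag_indicator d A) * (\<Sum>b<d. X $$ (b, A mod d) * Y $$ (b, A div d)))"
    by (simp only: sum_diag_indicator[where F = "\<lambda>b b'. X $$ (b, _) * Y $$ (b', _)"])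
  also have "\<dots> = (\<Sum>a<d. \<Sum>b<d. X $$ (b, a) * Y $$ (b, a))"
    by (rule sum_diag_indicator)
  finally show ?thesis .
qed

lemma pairing_weight_idem: "pairing_weight d p i * pairing_weight d p i = pairing_weight d p i"
proof -
  have idem: "diag_indicator d A * diag_indicator d A = diag_indicator d A" for A
    by (simp add: diag_indicator_def)
  show ?thesis
    unfolding pairing_weight_def by (auto simp only: prod.distrib[symmetric] idem split: if_split)
qed

lemma sum_pairing_weight:
  assumes "(d * d) ^ p \<le> n"
  shows "(\<Sum>i<n. pairing_weight d p i) = real d ^ p"
proof -
  have "(\<Sum>i<n. pairing_weight d p i) = (\<Sum>i<(d * d) ^ p. pairing_weight d p i)"
    using assms by (intro sum.mono_neutral_right) (auto simp: pairing_weight_def)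
  also have "\<dots> = (\<Sum>i<(d * d) ^ p. \<Prod>t<p. diag_indicator d (digit (d * d) t i))"
    by (simp add: pairing_weight_def)
  also have "\<dots> = (\<Prod>t<p. \<Sum>A<d * d. diag_indicator d A)"
    by (rule sum_prod_digits)
  also have "\<dots> = real d ^ p"
    using sum_diag_indicator[of d "\<lambda>_ _. 1 :: real"] by simp
  finally show ?thesis .
qed

lemma paired_state_carrier: "paired_state d p n \<in> carrier_vec n"
  by (simp add: paired_state_def)

lemma paired_state_entry_mult:
  assumes "i < n" and "j < n"
  shows "paired_state d p n $ i * cnj (paired_state d p n $ j)
       = complex_of_real (pairing_weight d p i * pairing_weight d p j / real d ^ p)"
  using assms by (simp add: paired_state_def flip: of_real_mult)

lemma paired_state_unit:
  assumes d: "0 < d" and n: "(d * d) ^ p \<le> n"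
  shows "vnorm2 (paired_state d p n) = 1"
proof -
  have "(cmod (paired_state d p n $ i))\<^sup>2 = pairing_weight d p i / real d ^ p" if "i < n" for i
  proof -
    have "(cmod (paired_state d p n $ i))\<^sup>2 = (pairing_weight d p i)\<^sup>2 / (sqrt (real d ^ p))\<^sup>2"
      using that by (simp add: paired_state_def norm_divide power_divide)
    then show ?thesis
      by (simp add: power2_eq_square pairing_weight_idem)
  qed
  then have "vnorm2 (paired_state d p n) = (\<Sum>i<n. pairing_weight d p i / real d ^ p)"
    unfolding vnorm2_def by (simp add: paired_state_def)
  also have "\<dots> = 1"
    using d by (simp add: sum_divide_distrib[symmetric] sum_pairing_weight[OF n])
  finally show ?thesis .
qed

lemma prod_digits_split_pairs:
  fixes \<sigma> :: "nat \<Rightarrow> complex mat"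
  assumes d: "0 < d" and pk: "2 * p \<le> k" and i: "i < (d * d) ^ p" and j: "j < (d * d) ^ p"
  shows "(\<Prod>q<k. \<sigma> q $$ (digit d q j, digit d q i)) =
     (\<Prod>t<p. \<sigma> (2 * t) $$ (digit (d * d) t j mod d, digit (d * d) t i mod d) *
              \<sigma> (Suc (2 * t)) $$ (digit (d * d) t j div d, digit (d * d) t i div d)) *
     (\<Prod>q\<in>{2 * p..<k}. \<sigma> q $$ (0, 0))"
proof -
  have i': "i < d ^ (2 * p)" and j': "j < d ^ (2 * p)"
    using i j by (simp_all add: power_mult power2_eq_square)
  have split: "{..<k} = {..<2 * p} \<union> {2 * p..<k}"
    using pk by auto
  have "(\<Prod>q<k. \<sigma> q $$ (digit d q j, digit d q i)) =
      (\<Prod>q<2 * p. \<sigma> q $$ (digit d q j, digit d q i)) * (\<Prod>q\<in>{2 * p..<k}. \<sigma> q $$ (digit d q j, digit d q i))"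
    by (subst split, rule prod.union_disjoint) auto
  also have "(\<Prod>q\<in>{2 * p..<k}. \<sigma> q $$ (digit d q j, digit d q i)) = (\<Prod>q\<in>{2 * p..<k}. \<sigma> q $$ (0, 0))"
    using digit_eq_0_if_less_power[OF d i'] digit_eq_0_if_less_power[OF d j'] by (intro prod.cong) auto
  also have "(\<Prod>q<2 * p. \<sigma> q $$ (digit d q j, digit d q i)) =
     (\<Prod>t<p. \<sigma> (2 * t) $$ (digit (d * d) t j mod d, digit (d * d) t i mod d) *
              \<sigma> (Suc (2 * t)) $$ (digit (d * d) t j div d, digit (d * d) t i div d))"
    by (simp only: prod_lessThan_double digit_double[OF d] digit_Suc_double[OF d])
  finally show ?thesis .
qed

lemma mtrace_paired_proj_product_state:
  fixes \<sigma> :: "nat \<Rightarrow> complex mat"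
  assumes d: "0 < d" and pk: "2 * p \<le> k"
  shows "mtrace (proj_mat (paired_state d p (d ^ k)) * product_state k d \<sigma>) =
     complex_of_real (1 / real d ^ p) * (\<Prod>q\<in>{2 * p..<k}. \<sigma> q $$ (0, 0)) *
     (\<Prod>t<p. \<Sum>a<d. \<Sum>b<d. \<sigma> (2 * t) $$ (b, a) * \<sigma> (Suc (2 * t)) $$ (b, a))"
proof -
  let ?M = "(d * d) ^ p" and ?c = "complex_of_real (1 / real d ^ p)"
  let ?Z = "\<Prod>q\<in>{2 * p..<k}. \<sigma> q $$ (0, 0)"
  define F where "F i j = complex_of_real (pairing_weight d p i * pairing_weight d p j / real d ^ p) *
      (\<Prod>q<k. \<sigma> q $$ (digit d q j, digit d q i))" for i j
  define G where "G t A B = complex_of_real (diag_indicator d A * diag_indicator d B) *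
      \<sigma> (2 * t) $$ (B mod d, A mod d) * \<sigma> (Suc (2 * t)) $$ (B div d, A div d)" for t A B
  have M: "?M \<le> d ^ k"
    using d pk by (rule mult_self_power_le_power)
  have "mtrace (proj_mat (paired_state d p (d ^ k)) * product_state k d \<sigma>)
      = (\<Sum>i<d ^ k. \<Sum>j<d ^ k. paired_state d p (d ^ k) $ i * cnj (paired_state d p (d ^ k) $ j) *
           product_state k d \<sigma> $$ (j, i))"
    by (rule mtrace_proj_mat_mult[OF paired_state_carrier]) (simp add: product_state_def)
  also have "\<dots> = (\<Sum>i<d ^ k. \<Sum>j<d ^ k. F i j)"
    by (intro sum.cong refl) (simp add: paired_state_entry_mult product_state_def F_def)
  also have "\<dots> = (\<Sum>i<?M. \<Sum>j<d ^ k. F i j)"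
    using M by (intro sum.mono_neutral_right) (auto simp: F_def pairing_weight_def)
  also have "\<dots> = (\<Sum>i<?M. \<Sum>j<?M. F i j)"
    using M by (intro sum.cong refl sum.mono_neutral_right) (auto simp: F_def pairing_weight_def)
  also have "\<dots> = (\<Sum>i<?M. \<Sum>j<?M. ?c * ?Z * (\<Prod>t<p. G t (digit (d * d) t i) (digit (d * d) t j)))"
  proof (intro sum.cong refl)
    fix i j
    assume i: "i \<in> {..<?M}" and j: "j \<in> {..<?M}"
    have "complex_of_real (pairing_weight d p i * pairing_weight d p j / real d ^ p) =
        ?c * (\<Prod>t<p. complex_of_real (diag_indicator d (digit (d * d) t i) * diag_indicator d (digit (d * d) t j)))"
      using i j by (simp add: pairing_weight_def prod.distrib flip: of_real_mult of_real_prod)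
    then show "F i j = ?c * ?Z * (\<Prod>t<p. G t (digit (d * d) t i) (digit (d * d) t j))"
      using i j unfolding F_def G_def
      by (simp only: prod_digits_split_pairs[OF d pk] lessThan_iff prod.distrib mult_ac)
  qed
  also have "\<dots> = ?c * ?Z * (\<Sum>i<?M. \<Sum>j<?M. \<Prod>t<p. G t (digit (d * d) t i) (digit (d * d) t j))"
    by (simp add: sum_distrib_left)
  also have "(\<Sum>i<?M. \<Sum>j<?M. \<Prod>t<p. G t (digit (d * d) t i) (digit (d * d) t j))
      = (\<Prod>t<p. \<Sum>A<d * d. \<Sum>B<d * d. G t A B)"
    by (rule sum_sum_prod_digits)
  finally show ?thesis
    unfolding G_def by (simp only: sum_sum_diag_indicator)
qed

lemma mtrace_paired_proj_product_state_le:
  fixes \<sigma> :: "nat \<Rightarrow> complex mat"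
  assumes d: "0 < d" and pk: "2 * p \<le> k" and dens: "\<forall>q<k. density_mat d (\<sigma> q)"
  shows "Re (mtrace (proj_mat (paired_state d p (d ^ k)) * product_state k d \<sigma>)) \<le> 1 / real d ^ p"
proof -
  let ?Z = "\<Prod>q\<in>{2 * p..<k}. \<sigma> q $$ (0, 0)"
  let ?P = "\<Prod>t<p. \<Sum>a<d. \<Sum>b<d. \<sigma> (2 * t) $$ (b, a) * \<sigma> (Suc (2 * t)) $$ (b, a)"
  have Z: "cmod ?Z \<le> 1"
    unfolding prod_norm[symmetric] using density_mat_diag_norm_le1[OF _ d] dens by (intro prod_le_1) auto
  have P: "cmod ?P \<le> 1"
    unfolding prod_norm[symmetric] using density_mat_pair_overlap_le1 dens pk
    by (intro prod_le_1) (auto simp del: One_nat_def)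
  have "Re (mtrace (proj_mat (paired_state d p (d ^ k)) * product_state k d \<sigma>))
      \<le> cmod (mtrace (proj_mat (paired_state d p (d ^ k)) * product_state k d \<sigma>))"
    by (rule complex_Re_le_cmod)
  also have "\<dots> = 1 / real d ^ p * cmod ?Z * cmod ?P"
    by (simp add: mtrace_paired_proj_product_state[OF d pk] norm_mult norm_divide norm_power)
  also have "\<dots> \<le> 1 / real d ^ p * 1 * 1"
    using Z P by (intro mult_mono) auto
  finally show ?thesis
    by simp
qed

lemma hamiltonian_single_term:
  assumes M: "M \<in> carrier_mat (d ^ k) (d ^ k)"
  shows "hamiltonian k d k (\<lambda>_. M) = M"
proof -
  have "S = {..<k}" if "S \<in> k_subsets k k" for S
    using that card_subset_eq[of "{..<k}" S] unfolding k_subsets_def by auto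
  then have "k_subsets k k = {{..<k}}"
    unfolding k_subsets_def by auto
  moreover have "local_index d {..<k} i = i" if "i < d ^ k" for i
  proof -
    have "local_index d {..<k} i = (\<Sum>t<k. digit d t i * d ^ t)"
      unfolding local_index_def by (intro sum.cong) (auto simp: lessThan_atLeast0)
    then show ?thesis
      using that by (simp add: sum_digit_mult_power)
  qed
  ultimately show ?thesis
    using M by (intro eq_matI) (auto simp: hamiltonian_def embed_local_def)
qed

theorem mainTheorem8:
  fixes d k :: nat
  assumes "d \<ge> 2" and "k \<ge> 2"
  shows "\<exists>n h opt. valid_instance n d k h \<and>
           is_largest_eigenvalue (hamiltonian n d k h) opt \<and> opt > 0 \<and>
           (\<forall>\<sigma>. (\<forall>q<n. density_mat d (\<sigma> q)) \<longrightarrow>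
              Re (mtrace (hamiltonian n d k h * product_state n d \<sigma>))
                \<le> opt / real d ^ (k div 2))"
proof -
  let ?p = "k div 2"
  let ?P = "proj_mat (paired_state d ?p (d ^ k))"
  have d: "0 < d" and pk: "2 * ?p \<le> k"
    using assms by simp_all
  have u: "paired_state d ?p (d ^ k) \<in> carrier_vec (d ^ k)"
    and unit: "vnorm2 (paired_state d ?p (d ^ k)) = 1"
    using paired_state_carrier paired_state_unit[OF d mult_self_power_le_power[OF d pk]] by blast+
  have H: "hamiltonian k d k (\<lambda>_. ?P) = ?P"
    by (rule hamiltonian_single_term[OF proj_mat_carrier[OF u]])
  show ?thesis
  proof (intro exI conjI allI impI)
    show "valid_instance k d k (\<lambda>_. ?P)"
      unfolding valid_instance_def using proj_mat_psd[OF u] proj_mat_opnorm_le1[OF u unit] by blast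
    show "is_largest_eigenvalue (hamiltonian k d k (\<lambda>_. ?P)) 1"
      unfolding H by (rule proj_mat_largest_eigenvalue[OF u unit])
    show "Re (mtrace (hamiltonian k d k (\<lambda>_. ?P) * product_state k d \<sigma>)) \<le> 1 / real d ^ ?p"
      if "\<forall>q<k. density_mat d (\<sigma> q)" for \<sigma>
      unfolding H using d pk that by (rule mtrace_paired_proj_product_state_le)
  qed simp
qed

end
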